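(* Let $H=(V,E)$ be a hypergraph, let $e_1\in E$ and let $e_2\subsetneq e_1$ with $e_2\notin E$ and $|e_2|>1$. Define $H'=(V,E\cup\{e_2\})$. Then the projection $\operatorname{proj}_{\mathcal{J}^H}$ restricted to $\mathrm{MC}^{H'}$ is a linear isomorphism onto $\mathrm{MC}^H$, and \[\mathrm{MC}^{H'}=\Big\{w\in\mathbb{R}^{\mathcal{J}^{H'}}\ \Big|\ \operatorname{proj}_{\mathcal{J}^H}w\in\mathrm{MC}^H;\ w_J=\sum_{J'\in\mathcal{J}^{e_1}:\, J'\supseteq J} w_{J'}\ \ \forall J\in\mathcal{J}^{e_2}\Big\}.\]
   Context: Let $n$ be a positive integer, $[n]=\{1,\dots,n\}$. A hypergraph $H=(V,E)$ here has as vertex set $V$ a family of pairwise disjoint subsets of $[n]$, each of cardinality at least $2$, and hyperedge set $E$ consisting of subsets $e\subseteq V$ with $|e|\ge 2$. Write $L(V)=\{\{I\}: I\in V\}$. For a nonempty $e\subseteq V$, $\mathcal{J}^e$ denotes the family of sets $J\subseteq \bigcup_{I\in e} I$ with $|J\cap I|=1$ for every $I\in e$. Let $\mathcal{J}^H=\bigcup_{e\in L(V)\cup E}\mathcal{J}^e$. For $w\in\mathbb{R}^{\mathcal{J}^H}$ write $w_i=w_{\{i\}}$ and $w(A)=\sum_{i\in A}w_i$. Let $\mathscr{S}^H=\{w\in\{0,1\}^{\mathcal{J}^H}: w(I)=1\ \forall I\in V;\ w_J=\prod_{i\in J}w_i\ \forall J\in\mathcal{J}^H, |J|>1\}$ and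 $\mathrm{MC}^H=\operatorname{conv}\mathscr{S}^H$. $\operatorname{proj}_{S'}$ extracts the coordinates indexed by $S'$. *)

theory Defs
  imports "HOL-Analysis.Analysis" "HOL-Library.Function_Algebras"
begin

text \<open>Pointwise real vector space structure on functions, so that vectors in
  R^S (S a set of index sets) can be represented as functions
  nat set => real vanishing outside S, and the library notions
  convex hull and linear apply.\<close>

instantiation "fun" :: (type, real_vector) real_vector
begin
definition scaleR_fun :: "real \<Rightarrow> ('a \<Rightarrow> 'b) \<Rightarrow> 'a \<Rightarrow> 'b"
  where "scaleR_fun c f = (\<lambda>x. c *\<^sub>R f x)"
instance
  by standard (auto simp: scaleR_fun_def fun_eq_iff scaleR_add_right scaleR_add_left)
end

definition hypergraph :: "nat \<Rightarrow> nat set set \<Rightarrow> nat set set set \<Rightarrow> bool" where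
  "hypergraph n V E \<longleftrightarrow>
     (\<forall>I\<in>V. I \<subseteq> {1..n} \<and> card I \<ge> 2) \<and>
     (\<forall>I\<in>V. \<forall>I'\<in>V. I \<noteq> I' \<longrightarrow> I \<inter> I' = {}) \<and>
     (\<forall>e\<in>E. e \<subseteq> V \<and> card e \<ge> 2)"

definition LV :: "nat set set \<Rightarrow> nat set set set" where
  "LV V = (\<lambda>I. {I}) ` V"

definition Jfam :: "nat set set \<Rightarrow> nat set set" where
  "Jfam e = {J. J \<subseteq> \<Union>e \<and> (\<forall>I\<in>e. card (J \<inter> I) = 1)}"

definition JH :: "nat set set \<Rightarrow> nat set set set \<Rightarrow> nat set set" where
  "JH V E = \<Union> (Jfam ` (LV V \<union> E))"

definition RS :: "nat set set \<Rightarrow> (nat set \<Rightarrow> real) set" where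
  "RS S = {w. \<forall>J. J \<notin> S \<longrightarrow> w J = 0}"

text \<open>S^H (w_i = w {i})\<close>
definition SH :: "nat set set \<Rightarrow> nat set set set \<Rightarrow> (nat set \<Rightarrow> real) set" where
  "SH V E = {w \<in> RS (JH V E).
      (\<forall>J\<in>JH V E. w J \<in> {0, 1}) \<and>
      (\<forall>I\<in>V. (\<Sum>i\<in>I. w {i}) = 1) \<and>
      (\<forall>J\<in>JH V E. card J > 1 \<longrightarrow> w J = (\<Prod>i\<in>J. w {i}))}"

definition MC :: "nat set set \<Rightarrow> nat set set set \<Rightarrow> (nat set \<Rightarrow> real) set" where
  "MC V E = convex hull (SH V E)"

definition proj :: "nat set set \<Rightarrow> (nat set \<Rightarrow> real) \<Rightarrow> (nat set \<Rightarrow> real)" where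
  "proj S w = (\<lambda>J. if J \<in> S then w J else 0)"

end

(*
  At a point w of S^H every part I in V carries exactly one coordinate w_i = 1, and the
  chosen elements inside the union of e1 form the unique J' in J^{e1} with w_J' = 1.
  Hence for J in J^{e2} the sum of the w_J' over J' containing J is [J is chosen], which
  is the product of the w_i over i in J: on S^H the coordinates added in H' are linear
  functions of the old ones.  The resulting linear lift is inverse to the projection on
  S^H and on the subspace cut out by these marginal equations, and linear maps commute
  with convex hulls.
*)
theory Submission
  imports Defs
begin

lemma prod_zero_one:
  fixes x :: "'a \<Rightarrow> real"
  assumes "finite A" and "\<forall>i\<in>A. x i \<in> {0, 1}"
  shows "prod x A = (if \<forall>i\<in>A. x i = 1 then 1 else 0)"
  using assms by (induction A rule: finite_induct) auto

lemma prod_zero_one_closed: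
  fixes x :: "'a \<Rightarrow> real"
  shows "\<forall>i\<in>A. x i \<in> {0, 1} \<Longrightarrow> prod x A \<in> {0, 1}"
  by (cases "finite A") (simp_all add: prod_zero_one)

lemma sum_zero_one_eq_card:
  fixes x :: "'a \<Rightarrow> real"
  assumes "finite A" and "\<forall>i\<in>A. x i \<in> {0, 1}"
  shows "sum x A = real (card {i\<in>A. x i = 1})"
proof -
  have "sum x A = (\<Sum>i\<in>A. if x i = 1 then 1 else 0)"
    using assms(2) by (intro sum.cong) auto
  also have "\<dots> = real (card {i\<in>A. x i = 1})"
    using assms(1) by (simp add: sum.If_cases Int_def conj_commute)
  finally show ?thesis .
qed

lemma Jfam_antichain:
  assumes "\<forall>I\<in>e. finite I" and "J \<in> Jfam e" and "K \<in> Jfam e" and "J \<subseteq> K"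
  shows "J = K"
proof
  show "K \<subseteq> J"
  proof
    fix i assume "i \<in> K"
    then obtain I where I: "I \<in> e" "i \<in> I"
      using assms(3) unfolding Jfam_def by blast
    have "J \<inter> I = K \<inter> I"
      using assms I by (intro card_subset_eq) (auto simp: Jfam_def)
    then show "i \<in> J" using \<open>i \<in> K\<close> I by blast
  qed
qed (use assms(4) in blast)

lemma finite_Jfam: "finite (\<Union>e) \<Longrightarrow> finite (Jfam e)"
  by (rule finite_subset[of _ "Pow (\<Union>e)"]) (auto simp: Jfam_def)

lemma ones_in_Jfam:
  fixes x :: "nat \<Rightarrow> real"
  assumes "\<forall>I\<in>e. finite I" and "\<forall>I\<in>e. \<forall>i\<in>I. x i \<in> {0, 1}" and "\<forall>I\<in>e. sum x I = 1"
  shows "{i \<in> \<Union>e. x i = 1} \<in> Jfam e"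
  unfolding Jfam_def
proof (intro CollectI conjI ballI)
  fix I assume "I \<in> e"
  then have "{i \<in> \<Union>e. x i = 1} \<inter> I = {i\<in>I. x i = 1}" by blast
  with \<open>I \<in> e\<close> show "card ({i \<in> \<Union>e. x i = 1} \<inter> I) = 1"
    using assms sum_zero_one_eq_card[of I x] by auto
qed blast

lemma sum_Jfam_supersets_prod:
  fixes x :: "nat \<Rightarrow> real"
  assumes fin: "finite (\<Union>e1)" and "e2 \<subseteq> e1" and J: "J \<in> Jfam e2"
    and x01: "\<forall>I\<in>e1. \<forall>i\<in>I. x i \<in> {0, 1}" and "\<forall>I\<in>e1. sum x I = 1"
  shows "(\<Sum>J'\<in>{J' \<in> Jfam e1. J \<subseteq> J'}. \<Prod>i\<in>J'. x i) = (\<Prod>i\<in>J. x i)"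
proof -
  define C where "C = {i \<in> \<Union>e1. x i = 1}"
  have parts_fin: "\<forall>I\<in>e1. finite I"
    using fin by (meson Union_upper finite_subset)
  have C: "C \<in> Jfam e1"
    unfolding C_def using parts_fin assms(4,5) by (rule ones_in_Jfam)
  have prod_01: "(\<Prod>i\<in>K. x i) = (if K \<subseteq> C then 1 else 0)" if "K \<subseteq> \<Union>e1" for K
  proof -
    have "\<forall>i\<in>K. x i \<in> {0, 1}" using that x01 by blast
    moreover have "K \<subseteq> C \<longleftrightarrow> (\<forall>i\<in>K. x i = 1)" using that unfolding C_def by blast
    ultimately show ?thesis using prod_zero_one[of K x] finite_subset[OF that fin] by simp
  qed
  have transversal: "(\<Prod>i\<in>J'. x i) = (if J' = C then 1 else 0)" if "J' \<in> Jfam e1" for J'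
  proof -
    have "J' \<subseteq> C \<longleftrightarrow> J' = C"
      using Jfam_antichain[OF parts_fin that C] by blast
    with that show ?thesis using prod_01[of J'] by (simp add: Jfam_def)
  qed
  have "(\<Sum>J'\<in>{J' \<in> Jfam e1. J \<subseteq> J'}. \<Prod>i\<in>J'. x i)
      = (\<Sum>J'\<in>{J' \<in> Jfam e1. J \<subseteq> J'}. if J' = C then 1 else 0)"
    using transversal by (intro sum.cong) auto
  also have "\<dots> = (if J \<subseteq> C then 1 else 0)"
    using C finite_Jfam[OF fin] by (simp add: sum.delta')
  also have "\<dots> = (\<Prod>i\<in>J. x i)"
  proof -
    have "J \<subseteq> \<Union>e1" using J assms(2) unfolding Jfam_def by blast
    then show ?thesis by (simp add: prod_01)
  qed
  finally show ?thesis .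
qed

lemma hypergraph_insert_edge:
  "hypergraph n V E \<Longrightarrow> e \<subseteq> V \<Longrightarrow> 2 \<le> card e \<Longrightarrow> hypergraph n V (insert e E)"
  by (simp add: hypergraph_def)

lemma hypergraph_subset: "hypergraph n V E' \<Longrightarrow> E \<subseteq> E' \<Longrightarrow> hypergraph n V E"
  by (auto simp: hypergraph_def)

lemma hypergraph_finite_Union: "hypergraph n V E \<Longrightarrow> finite (\<Union>V)"
  by (rule finite_subset[of _ "{1..n}"]) (auto simp: hypergraph_def)

lemma singleton_in_JH: "I \<in> V \<Longrightarrow> i \<in> I \<Longrightarrow> {i} \<in> JH V E"
  unfolding JH_def LV_def Jfam_def by (rule UN_I[of "{I}"]) auto

lemma Jfam_subset_JH: "e \<in> E \<Longrightarrow> Jfam e \<subseteq> JH V E"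
  unfolding JH_def by blast

lemma JH_mono: "E \<subseteq> E' \<Longrightarrow> JH V E \<subseteq> JH V E'"
  unfolding JH_def by blast

lemma JH_insert: "JH V (insert e E) = JH V E \<union> Jfam e"
  unfolding JH_def by blast

lemma hypergraph_LV_edge:
  assumes "hypergraph n V E" and "e \<in> LV V \<union> E"
  shows "e \<subseteq> V" and "e \<noteq> {}"
proof -
  have "e \<subseteq> V \<and> e \<noteq> {}" if "e \<in> E"
    using assms(1) that unfolding hypergraph_def by force
  moreover have "e \<subseteq> V \<and> e \<noteq> {}" if "e \<in> LV V"
    using that unfolding LV_def by blast
  ultimately show "e \<subseteq> V" and "e \<noteq> {}"
    using assms(2) by blast+
qed

lemma JH_subset_Pow_Union:
  assumes "hypergraph n V E"
  shows "JH V E \<subseteq> Pow (\<Union>V)"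
proof
  fix J assume "J \<in> JH V E"
  then obtain e where "e \<in> LV V \<union> E" "J \<in> Jfam e"
    unfolding JH_def by blast
  with hypergraph_LV_edge(1)[OF assms] show "J \<in> Pow (\<Union>V)"
    unfolding Jfam_def by blast
qed

lemma JH_member_nonempty:
  assumes "hypergraph n V E" and "J \<in> JH V E"
  shows "J \<noteq> {}"
proof -
  obtain e where e: "e \<in> LV V \<union> E" "J \<in> Jfam e"
    using assms(2) unfolding JH_def by blast
  then obtain I where "I \<in> e"
    using hypergraph_LV_edge(2)[OF assms(1)] by blast
  then have "card (J \<inter> I) = 1" using e(2) unfolding Jfam_def by blast
  then show ?thesis by auto
qed

lemma SH_vertex_01: "v \<in> SH V E \<Longrightarrow> I \<in> V \<Longrightarrow> i \<in> I \<Longrightarrow> v {i} \<in> {0, 1}"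
  using singleton_in_JH unfolding SH_def by blast

lemma SH_prod:
  assumes "hypergraph n V E" and "v \<in> SH V E" and J: "J \<in> JH V E"
  shows "v J = (\<Prod>i\<in>J. v {i})"
proof (cases "card J > 1")
  case True
  then show ?thesis using assms(2) J unfolding SH_def by blast
next
  case False
  have "finite J"
    using J JH_subset_Pow_Union[OF assms(1)] hypergraph_finite_Union[OF assms(1)]
    by (meson PowD finite_subset subsetD)
  with False JH_member_nonempty[OF assms(1) J] have "card J = 1"
    by (metis card_eq_0_iff less_one linorder_neqE_nat)
  then show ?thesis by (auto simp: card_1_singleton_iff)
qed

lemma SH_sum_Jfam_supersets:
  assumes hg: "hypergraph n V E" and "e1 \<in> E" and "e2 \<subseteq> e1"
    and v: "v \<in> SH V E" and J: "J \<in> Jfam e2"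
  shows "(\<Sum>J'\<in>{J' \<in> Jfam e1. J \<subseteq> J'}. v J') = (\<Prod>i\<in>J. v {i})"
proof -
  have e1V: "e1 \<subseteq> V" using hypergraph_LV_edge(1)[OF hg] \<open>e1 \<in> E\<close> by blast
  have "(\<Sum>J'\<in>{J' \<in> Jfam e1. J \<subseteq> J'}. v J')
      = (\<Sum>J'\<in>{J' \<in> Jfam e1. J \<subseteq> J'}. \<Prod>i\<in>J'. v {i})"
    using SH_prod[OF hg v] Jfam_subset_JH[OF \<open>e1 \<in> E\<close>] by (intro sum.cong) auto
  also have "\<dots> = (\<Prod>i\<in>J. v {i})"
  proof (rule sum_Jfam_supersets_prod[OF _ \<open>e2 \<subseteq> e1\<close> J])
    show "finite (\<Union>e1)"
      using hypergraph_finite_Union[OF hg] e1V by (meson Union_mono finite_subset)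
    show "\<forall>I\<in>e1. \<forall>i\<in>I. v {i} \<in> {0, 1}"
      using SH_vertex_01[OF v] e1V by (meson subsetD)
    show "\<forall>I\<in>e1. (\<Sum>i\<in>I. v {i}) = 1"
      using v e1V unfolding SH_def by (simp add: subset_iff)
  qed
  finally show ?thesis .
qed

lemma SH_insert_sum_Jfam_supersets:
  assumes hg': "hypergraph n V (insert e2 E)" and "e1 \<in> E" and "e2 \<subseteq> e1"
    and v: "v \<in> SH V (insert e2 E)" and J: "J \<in> Jfam e2"
  shows "v J = (\<Sum>J'\<in>{J' \<in> Jfam e1. J \<subseteq> J'}. v J')"
proof -
  have "v J = (\<Prod>i\<in>J. v {i})"
    using SH_prod[OF hg' v] J JH_insert by blast
  also have "\<dots> = (\<Sum>J'\<in>{J' \<in> Jfam e1. J \<subseteq> J'}. v J')"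
    using SH_sum_Jfam_supersets[OF hg' _ \<open>e2 \<subseteq> e1\<close> v J] \<open>e1 \<in> E\<close> by simp
  finally show ?thesis .
qed

lemma linear_proj: "linear (proj S)"
  by (rule linearI) (auto simp: proj_def scaleR_fun_def)

lemma proj_SH_subset:
  assumes hg': "hypergraph n V E'" and "E \<subseteq> E'"
  shows "proj (JH V E) ` SH V E' \<subseteq> SH V E"
proof
  fix u assume "u \<in> proj (JH V E) ` SH V E'"
  then obtain v where v: "v \<in> SH V E'" and u: "u = proj (JH V E) v" by blast
  have hg: "hypergraph n V E" using hypergraph_subset[OF hg' \<open>E \<subseteq> E'\<close>] .
  have old: "u J = v J" if "J \<in> JH V E" for J
    using that u unfolding proj_def by simp
  have vertex: "u {i} = v {i}" if "i \<in> \<Union>V" for i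
    using old singleton_in_JH that by blast
  show "u \<in> SH V E"
    unfolding SH_def
  proof (intro CollectI conjI ballI impI)
    show "u \<in> RS (JH V E)" using u unfolding RS_def proj_def by simp
  next
    fix J assume J: "J \<in> JH V E"
    then have J': "J \<in> JH V E'" using JH_mono[OF \<open>E \<subseteq> E'\<close>] by blast
    show "u J \<in> {0, 1}" using v J' old[OF J] unfolding SH_def by simp
    have "u J = (\<Prod>i\<in>J. v {i})" using old[OF J] SH_prod[OF hg' v J'] by simp
    also have "\<dots> = (\<Prod>i\<in>J. u {i})"
    proof (rule prod.cong)
      show "v {i} = u {i}" if "i \<in> J" for i
        using that J JH_subset_Pow_Union[OF hg] by (intro vertex[symmetric]) blast
    qed simp
    finally show "u J = (\<Prod>i\<in>J. u {i})" .
  next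
    fix I assume "I \<in> V"
    then have "(\<Sum>i\<in>I. u {i}) = (\<Sum>i\<in>I. v {i})"
      by (intro sum.cong refl vertex) blast
    then show "(\<Sum>i\<in>I. u {i}) = 1" using v \<open>I \<in> V\<close> unfolding SH_def by simp
  qed
qed

definition marginal_lift ::
    "nat set set \<Rightarrow> nat set set \<Rightarrow> nat set set \<Rightarrow> (nat set \<Rightarrow> real) \<Rightarrow> nat set \<Rightarrow> real" where
  "marginal_lift S e1 e2 w = (\<lambda>J. if J \<in> S then w J
     else if J \<in> Jfam e2 then (\<Sum>J'\<in>{J' \<in> Jfam e1. J \<subseteq> J'}. w J') else 0)"

lemma linear_marginal_lift: "linear (marginal_lift S e1 e2)"
  by (rule linearI) (auto simp: marginal_lift_def scaleR_fun_def sum.distrib sum_distrib_left)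

lemma proj_marginal_lift: "w \<in> RS S \<Longrightarrow> proj S (marginal_lift S e1 e2 w) = w"
  unfolding proj_def marginal_lift_def RS_def by auto

lemma marginal_lift_proj:
  assumes "Jfam e1 \<subseteq> S" and "w \<in> RS (S \<union> Jfam e2)"
    and "\<forall>J\<in>Jfam e2. w J = (\<Sum>J'\<in>{J' \<in> Jfam e1. J \<subseteq> J'}. w J')"
  shows "marginal_lift S e1 e2 (proj S w) = w"
proof
  fix J
  have "(\<Sum>J'\<in>{J' \<in> Jfam e1. J \<subseteq> J'}. proj S w J')
      = (\<Sum>J'\<in>{J' \<in> Jfam e1. J \<subseteq> J'}. w J')"
    using assms(1) unfolding proj_def by (intro sum.cong) auto
  then show "marginal_lift S e1 e2 (proj S w) J = w J"
    using assms(2,3) unfolding marginal_lift_def RS_def by (auto simp: proj_def)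
qed

lemma marginal_lift_SH_subset:
  assumes hg: "hypergraph n V E" and "e1 \<in> E" and "e2 \<subseteq> e1"
  shows "marginal_lift (JH V E) e1 e2 ` SH V E \<subseteq> SH V (insert e2 E)"
proof
  fix u assume "u \<in> marginal_lift (JH V E) e1 e2 ` SH V E"
  then obtain v where v: "v \<in> SH V E" and u: "u = marginal_lift (JH V E) e1 e2 v" by blast
  have old: "u J = v J" if "J \<in> JH V E" for J
    using that u unfolding marginal_lift_def by simp
  have new: "u J = (\<Prod>i\<in>J. v {i})" if "J \<in> Jfam e2" "J \<notin> JH V E" for J
    using that u SH_sum_Jfam_supersets[OF hg \<open>e1 \<in> E\<close> \<open>e2 \<subseteq> e1\<close> v]
    unfolding marginal_lift_def by simp
  have vertex: "u {i} = v {i}" if "i \<in> \<Union>V" for i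
    using old singleton_in_JH that by blast
  have covered: "JH V (insert e2 E) \<subseteq> Pow (\<Union>V)"
  proof -
    have "e2 \<subseteq> V" using hypergraph_LV_edge(1)[OF hg] assms(2,3) by blast
    then have "Jfam e2 \<subseteq> Pow (\<Union>V)" unfolding Jfam_def by blast
    then show ?thesis using JH_subset_Pow_Union[OF hg] JH_insert by blast
  qed
  have prod: "u J = (\<Prod>i\<in>J. u {i})" if J: "J \<in> JH V (insert e2 E)" for J
  proof -
    have "u J = (\<Prod>i\<in>J. v {i})"
      using J old new SH_prod[OF hg v] JH_insert by (cases "J \<in> JH V E") auto
    also have "\<dots> = (\<Prod>i\<in>J. u {i})"
    proof (rule prod.cong)
      show "v {i} = u {i}" if "i \<in> J" for i
        using that J covered by (intro vertex[symmetric]) blast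
    qed simp
    finally show ?thesis .
  qed
  have vertex01: "u {i} \<in> {0, 1}" if "i \<in> \<Union>V" for i
    using that vertex SH_vertex_01[OF v] by auto
  show "u \<in> SH V (insert e2 E)"
    unfolding SH_def
  proof (intro CollectI conjI ballI impI)
    show "u \<in> RS (JH V (insert e2 E))"
      using u JH_insert unfolding RS_def marginal_lift_def by simp
  next
    fix J assume J: "J \<in> JH V (insert e2 E)"
    show "u J = (\<Prod>i\<in>J. u {i})" using prod[OF J] .
    have "\<forall>i\<in>J. u {i} \<in> {0, 1}"
      using J covered by (intro ballI vertex01) blast
    then show "u J \<in> {0, 1}"
      unfolding prod[OF J] by (rule prod_zero_one_closed)
  next
    fix I assume "I \<in> V"
    then have "(\<Sum>i\<in>I. u {i}) = (\<Sum>i\<in>I. v {i})"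
      by (intro sum.cong refl vertex) blast
    then show "(\<Sum>i\<in>I. u {i}) = 1" using v \<open>I \<in> V\<close> unfolding SH_def by simp
  qed
qed

lemma convex_hull_linear_retraction:
  fixes P :: "'a::real_vector \<Rightarrow> 'b::real_vector" and X :: "'b \<Rightarrow> 'a"
  assumes "linear P" and "linear X" and "P ` S' \<subseteq> S" and "X ` S \<subseteq> S'"
    and PX: "\<And>v. v \<in> S \<Longrightarrow> P (X v) = v"
    and "S' \<subseteq> K" and "convex K" and XP: "\<And>w. w \<in> K \<Longrightarrow> X (P w) = w"
  shows "inj_on P (convex hull S')"
    and "P ` (convex hull S') = convex hull S"
    and "convex hull S' = {w \<in> K. P w \<in> convex hull S}"
proof -
  have "S \<subseteq> P ` S'"
  proof
    fix v assume "v \<in> S"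
    then have "v = P (X v)" and "X v \<in> S'"
      using PX \<open>X ` S \<subseteq> S'\<close> by auto
    then show "v \<in> P ` S'" by (rule image_eqI)
  qed
  with \<open>P ` S' \<subseteq> S\<close> have "P ` S' = S" by blast
  then show image: "P ` (convex hull S') = convex hull S"
    using convex_hull_linear_image[OF \<open>linear P\<close>, of S'] by simp
  have hull_K: "convex hull S' \<subseteq> K"
    using \<open>S' \<subseteq> K\<close> \<open>convex K\<close> by (rule hull_minimal)
  then show "inj_on P (convex hull S')"
    using XP by (intro inj_on_inverseI[where g = X]) blast
  have X_hull: "X ` (convex hull S) \<subseteq> convex hull S'"
    unfolding convex_hull_linear_image[OF \<open>linear X\<close>]
    using \<open>X ` S \<subseteq> S'\<close> by (rule hull_mono)
  show "convex hull S' = {w \<in> K. P w \<in> convex hull S}"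
  proof
    show "convex hull S' \<subseteq> {w \<in> K. P w \<in> convex hull S}"
      using hull_K image by blast
    show "{w \<in> K. P w \<in> convex hull S} \<subseteq> convex hull S'"
    proof
      fix w assume w: "w \<in> {w \<in> K. P w \<in> convex hull S}"
      then have "w = X (P w)" using XP by simp
      also have "\<dots> \<in> convex hull S'" using X_hull w by blast
      finally show "w \<in> convex hull S'" .
    qed
  qed
qed

theorem proposition2p3:
  fixes n :: nat and V :: "nat set set" and E :: "nat set set set"
    and e1 e2 :: "nat set set"
  assumes "hypergraph n V E"
    and "e1 \<in> E" and "e2 \<subset> e1" and "e2 \<notin> E" and "card e2 > 1"
  shows "linear (proj (JH V E))
     \<and> inj_on (proj (JH V E)) (MC V (insert e2 E))
     \<and> proj (JH V E) ` MC V (insert e2 E) = MC V E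
     \<and> MC V (insert e2 E) =
         {w \<in> RS (JH V (insert e2 E)).
            proj (JH V E) w \<in> MC V E \<and>
            (\<forall>J\<in>Jfam e2. w J = (\<Sum>J'\<in>{J' \<in> Jfam e1. J \<subseteq> J'}. w J'))}"
proof -
  have hg: "hypergraph n V E" and "e1 \<in> E" and "e2 \<subseteq> e1" and "2 \<le> card e2"
    using assms by auto
  have hg': "hypergraph n V (insert e2 E)"
    using hypergraph_insert_edge[OF hg _ \<open>2 \<le> card e2\<close>] hypergraph_LV_edge(1)[OF hg]
      \<open>e1 \<in> E\<close> \<open>e2 \<subseteq> e1\<close> by blast
  define K where "K = {w \<in> RS (JH V (insert e2 E)).
    \<forall>J\<in>Jfam e2. w J = (\<Sum>J'\<in>{J' \<in> Jfam e1. J \<subseteq> J'}. w J')}"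
  have "convex K"
    unfolding K_def RS_def convex_def by (auto simp: scaleR_fun_def sum.distrib sum_distrib_left)
  have "SH V (insert e2 E) \<subseteq> K"
    using SH_insert_sum_Jfam_supersets[OF hg' \<open>e1 \<in> E\<close> \<open>e2 \<subseteq> e1\<close>]
    unfolding K_def SH_def by blast
  have lift_proj: "marginal_lift (JH V E) e1 e2 (proj (JH V E) w) = w" if "w \<in> K" for w
    using that Jfam_subset_JH[OF \<open>e1 \<in> E\<close>] JH_insert
    unfolding K_def by (intro marginal_lift_proj) auto
  have proj_lift: "proj (JH V E) (marginal_lift (JH V E) e1 e2 v) = v" if "v \<in> SH V E" for v
    using that unfolding SH_def by (intro proj_marginal_lift) blast
  note retraction = convex_hull_linear_retraction[of "proj (JH V E)" "marginal_lift (JH V E) e1 e2"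
      "SH V (insert e2 E)" "SH V E" K, OF linear_proj linear_marginal_lift
      proj_SH_subset[OF hg' subset_insertI] marginal_lift_SH_subset[OF hg \<open>e1 \<in> E\<close> \<open>e2 \<subseteq> e1\<close>]
      proj_lift \<open>SH V (insert e2 E) \<subseteq> K\<close> \<open>convex K\<close> lift_proj]
  show ?thesis
    using retraction linear_proj unfolding MC_def K_def by auto
qed

end
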